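(* Let $\varphi$ be an $\mathrm{SLTL}$ formula whose standpoint symbols other than $*$ are $s_1,\dots,s_n$ (treated as propositional variables in $\mathrm{PTL}\times\mathbf{S5}$, distinct from those of $\varphi$). Let $t_2$ be the translation that is the identity on propositional variables, commutes with Boolean connectives and with $X$ and $U$, and satisfies $t_2(\Diamond_*\psi)=\Diamond t_2(\psi)$, $t_2(\Box_*\psi)=\Box t_2(\psi)$, $t_2(\Diamond_s\psi)=\Diamond(s\wedge t_2(\psi))$, $t_2(\Box_s\psi)=\Box(s\to t_2(\psi))$, and $t_2(s\preceq s')=\Box(s\to s')$ for standpoint symbols $s,s'$. Let $\chi_n=\bigwedge_{1\le i\le n}\Diamond s_i\wedge\Box\bigwedge_{1\le i\le n}(G s_i\vee G\neg s_i)$, where $G\psi$ abbreviates "always in the future" $\neg(\top\,U\,\neg\psi)$. Then $\varphi$ is $\mathrm{SLTL}$-satisfiable if and only if $\chi_n\wedge t_2(\varphi)$ is $\mathrm{PTL}\times\mathbf{S5}$-satisfiable.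
   Context: Fix a countably infinite set $\mathcal{P}$ of propositional variables and a countably infinite set $\mathcal{S}$ of standpoint symbols containing a distinguished universal standpoint symbol $*$. SLTL: formulae $\varphi ::= p \mid s \preceq s' \mid \neg\varphi \mid \varphi\wedge\varphi \mid \Diamond_s\varphi \mid \Box_s\varphi \mid X\varphi \mid \varphi\,U\,\varphi$ ($p\in\mathcal{P}$, $s,s'\in\mathcal{S}$). A model is $M=(\Pi,\lambda)$, $\Pi\neq\emptyset$ a set of traces $\sigma:\mathbb{N}\to 2^{\mathcal{P}}$, $\lambda:\mathcal{S}\to 2^{\Pi}\setminus\{\emptyset\}$ with $\lambda( * )=\Pi$. Semantics: $M,\sigma,i\models p$ iff $p\in\sigma(i)$; $M,\sigma,i\models s\preceq s'$ iff $\lambda(s)\subseteq\lambda(s')$; Boolean clauses as usual; $M,\sigma,i\models\Diamond_s\psi$ iff $M,\sigma',i\models\psi$ for some $\sigma'\in\lambda(s)$; $\Box_s$ dually with "for all"; $M,\sigma,i\models X\psi$ iff $M,\sigma,i+1\models\psi$; $M,\sigma,i\models\psi\,U\,\chi$ iff there is $i'\ge i$ with $M,\sigma,i'\models\chi$ and $M,\sigma,i''\models\psi$ for all $i\le i''<i'$. $\varphi$ is SLTL-satisfiable iff $M,\sigma,0\models\varphi$ for some $M=(\Pi,\lambda)$ and $\sigma\in\Pi$. $\mathrm{PTL}\times\mathbf{S5}$: formulae $\varphi ::= p \mid \neg\varphi\mid\varphi\wedge\varphi\mid\Diamond\varphi\mid\Box\varphi\mid X\varphi\mid\varphi\,U\,\varphi$.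 A model is $M=(\mathbb{N}\times W,R,L)$ with $W\neq\emptyset$, $R$ an equivalence relation on $W$, $L:\mathbb{N}\times W\to 2^{\mathcal{P}}$. Semantics: $M,(n,w)\models p$ iff $p\in L(n,w)$; $\Diamond\psi$ (resp. $\Box\psi$) holds at $(n,w)$ iff $\psi$ holds at $(n,w')$ for some (resp. all) $w'$ with $wRw'$; $X\psi$ holds at $(n,w)$ iff $\psi$ holds at $(n+1,w)$; $\psi\,U\,\chi$ holds at $(n,w)$ iff there is $n'\ge n$ with $\chi$ at $(n',w)$ and $\psi$ at $(n'',w)$ for all $n\le n''<n'$. A formula is satisfiable iff it holds at some point of some model. *)

theory Defs
  imports Main
begin

datatype sp = Star | Sp nat

datatype sltl =
    SVar nat
  | SSharp sp sp
  | SNeg sltl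
  | SAnd sltl sltl
  | SDia sp sltl
  | SBox sp sltl
  | SX sltl
  | SU sltl sltl

type_synonym trace = "nat \<Rightarrow> nat set"

fun ssat :: "trace set \<Rightarrow> (sp \<Rightarrow> trace set) \<Rightarrow> trace \<Rightarrow> nat \<Rightarrow> sltl \<Rightarrow> bool" where
  "ssat P lam \<sigma> i (SVar p) = (p \<in> \<sigma> i)"
| "ssat P lam \<sigma> i (SSharp s s') = (lam s \<subseteq> lam s')"
| "ssat P lam \<sigma> i (SNeg \<psi>) = (\<not> ssat P lam \<sigma> i \<psi>)"
| "ssat P lam \<sigma> i (SAnd \<psi> \<chi>) = (ssat P lam \<sigma> i \<psi> \<and> ssat P lam \<sigma> i \<chi>)"
| "ssat P lam \<sigma> i (SDia s \<psi>) = (\<exists>\<sigma>'\<in>lam s. ssat P lam \<sigma>' i \<psi>)"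
| "ssat P lam \<sigma> i (SBox s \<psi>) = (\<forall>\<sigma>'\<in>lam s. ssat P lam \<sigma>' i \<psi>)"
| "ssat P lam \<sigma> i (SX \<psi>) = ssat P lam \<sigma> (Suc i) \<psi>"
| "ssat P lam \<sigma> i (SU \<psi> \<chi>) =
     (\<exists>i'\<ge>i. ssat P lam \<sigma> i' \<chi> \<and> (\<forall>i''. i \<le> i'' \<and> i'' < i' \<longrightarrow> ssat P lam \<sigma> i'' \<psi>))"

definition sltl_model :: "trace set \<Rightarrow> (sp \<Rightarrow> trace set) \<Rightarrow> bool" where
  "sltl_model P lam \<longleftrightarrow> P \<noteq> {} \<and> (\<forall>s. lam s \<subseteq> P \<and> lam s \<noteq> {}) \<and> lam Star = P"

definition sltl_satisfiable :: "sltl \<Rightarrow> bool" where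
  "sltl_satisfiable \<phi> \<longleftrightarrow> (\<exists>P lam \<sigma>. sltl_model P lam \<and> \<sigma> \<in> P \<and> ssat P lam \<sigma> 0 \<phi>)"

fun sp_syms :: "sp \<Rightarrow> nat set" where
  "sp_syms Star = {}"
| "sp_syms (Sp k) = {k}"

fun stps :: "sltl \<Rightarrow> nat set" where
  "stps (SVar p) = {}"
| "stps (SSharp s s') = sp_syms s \<union> sp_syms s'"
| "stps (SNeg \<psi>) = stps \<psi>"
| "stps (SAnd \<psi> \<chi>) = stps \<psi> \<union> stps \<chi>"
| "stps (SDia s \<psi>) = sp_syms s \<union> stps \<psi>"
| "stps (SBox s \<psi>) = sp_syms s \<union> stps \<psi>"
| "stps (SX \<psi>) = stps \<psi>"
| "stps (SU \<psi> \<chi>) = stps \<psi> \<union> stps \<chi>"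

datatype 'a ptl =
    PVar 'a
  | PNeg "'a ptl"
  | PAnd "'a ptl" "'a ptl"
  | PDia "'a ptl"
  | PBox "'a ptl"
  | PX "'a ptl"
  | PU "'a ptl" "'a ptl"

fun psat :: "'w set \<Rightarrow> ('w \<times> 'w) set \<Rightarrow> (nat \<times> 'w \<Rightarrow> 'a set) \<Rightarrow> nat \<Rightarrow> 'w \<Rightarrow> 'a ptl \<Rightarrow> bool" where
  "psat W R L n w (PVar p) = (p \<in> L (n, w))"
| "psat W R L n w (PNeg \<psi>) = (\<not> psat W R L n w \<psi>)"
| "psat W R L n w (PAnd \<psi> \<chi>) = (psat W R L n w \<psi> \<and> psat W R L n w \<chi>)"
| "psat W R L n w (PDia \<psi>) = (\<exists>w'. (w, w') \<in> R \<and> psat W R L n w' \<psi>)"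
| "psat W R L n w (PBox \<psi>) = (\<forall>w'. (w, w') \<in> R \<longrightarrow> psat W R L n w' \<psi>)"
| "psat W R L n w (PX \<psi>) = psat W R L (Suc n) w \<psi>"
| "psat W R L n w (PU \<psi> \<chi>) =
     (\<exists>n'\<ge>n. psat W R L n' w \<chi> \<and> (\<forall>n''. n \<le> n'' \<and> n'' < n' \<longrightarrow> psat W R L n'' w \<psi>))"

definition ptl_model :: "'w set \<Rightarrow> ('w \<times> 'w) set \<Rightarrow> bool" where
  "ptl_model W R \<longleftrightarrow> W \<noteq> {} \<and> equiv W R"

definition ptl_satisfiable :: "'w itself \<Rightarrow> 'a ptl \<Rightarrow> bool" where
  "ptl_satisfiable _ \<phi> \<longleftrightarrow>
     (\<exists>(W :: 'w set) R L n w. ptl_model W R \<and> w \<in> W \<and> psat W R L n w \<phi>)"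

definition ptop :: "'a ptl" where
  "ptop = PNeg (PAnd (PVar undefined) (PNeg (PVar undefined)))"

definition por :: "'a ptl \<Rightarrow> 'a ptl \<Rightarrow> 'a ptl" where
  "por a b = PNeg (PAnd (PNeg a) (PNeg b))"

definition pimp :: "'a ptl \<Rightarrow> 'a ptl \<Rightarrow> 'a ptl" where
  "pimp a b = PNeg (PAnd a (PNeg b))"

definition PG :: "'a ptl \<Rightarrow> 'a ptl" where
  "PG a = PNeg (PU ptop (PNeg a))"

fun pconj :: "'a ptl list \<Rightarrow> 'a ptl" where
  "pconj [] = ptop"
| "pconj (a # as) = PAnd a (pconj as)"

text \<open>PTL x S5 variables: Inl p for the propositional variable p of SLTL,
  Inr k for the standpoint symbol Sp k (so these are distinct).\<close>

fun sp_to_ptl :: "sp \<Rightarrow> (nat + nat) ptl" where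
  "sp_to_ptl Star = ptop"
| "sp_to_ptl (Sp k) = PVar (Inr k)"

fun t2 :: "sltl \<Rightarrow> (nat + nat) ptl" where
  "t2 (SVar p) = PVar (Inl p)"
| "t2 (SSharp s s') = PBox (pimp (sp_to_ptl s) (sp_to_ptl s'))"
| "t2 (SNeg \<psi>) = PNeg (t2 \<psi>)"
| "t2 (SAnd \<psi> \<chi>) = PAnd (t2 \<psi>) (t2 \<chi>)"
| "t2 (SDia Star \<psi>) = PDia (t2 \<psi>)"
| "t2 (SDia (Sp k) \<psi>) = PDia (PAnd (PVar (Inr k)) (t2 \<psi>))"
| "t2 (SBox Star \<psi>) = PBox (t2 \<psi>)"
| "t2 (SBox (Sp k) \<psi>) = PBox (pimp (PVar (Inr k)) (t2 \<psi>))"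
| "t2 (SX \<psi>) = PX (t2 \<psi>)"
| "t2 (SU \<psi> \<chi>) = PU (t2 \<psi>) (t2 \<chi>)"

definition chi :: "sltl \<Rightarrow> (nat + nat) ptl" where
  "chi \<phi> = (let ks = sorted_list_of_set (stps \<phi>) in
     PAnd (pconj (map (\<lambda>k. PDia (PVar (Inr k))) ks))
          (PBox (pconj (map (\<lambda>k. por (PG (PVar (Inr k))) (PG (PNeg (PVar (Inr k))))) ks))))"

end

theory Submission
  imports Defs
begin

(* Over an S5 cluster, worlds and traces can be identified. An SLTL model (Pi, lambda) is a
   PTL x S5 model with the traces as worlds, all related to each other, in which s_k holds
   at a trace iff the trace lies in lambda(s_k). Conversely, the worlds of the cluster of a
   point satisfying chi_n /\ t2(phi), read as traces, form an SLTL model in which lambda(s_k)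
   collects the worlds where s_k holds: chi_n makes these sets nonempty and makes s_k rigid
   in time, so membership does not depend on the time point. In both cases phi and t2(phi)
   agree by one induction on phi, for the SLTL model given by a cluster and a map from its
   worlds onto the traces. *)

fun svars :: "sltl \<Rightarrow> nat set" where
  "svars (SVar p) = {p}"
| "svars (SSharp s s') = {}"
| "svars (SNeg \<psi>) = svars \<psi>"
| "svars (SAnd \<psi> \<chi>) = svars \<psi> \<union> svars \<chi>"
| "svars (SDia s \<psi>) = svars \<psi>"
| "svars (SBox s \<psi>) = svars \<psi>"
| "svars (SX \<psi>) = svars \<psi>"
| "svars (SU \<psi> \<chi>) = svars \<psi> \<union> svars \<chi>"

lemma finite_svars: "finite (svars \<psi>)"
  by (induction \<psi>) auto

lemma finite_sp_syms: "finite (sp_syms s)"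
  by (cases s) auto

lemma finite_stps: "finite (stps \<psi>)"
  by (induction \<psi>) (auto simp: finite_sp_syms)

lemma ex_ge_add_iff: "(\<exists>m\<ge>(n::nat) + i. P m) \<longleftrightarrow> (\<exists>j\<ge>i. P (n + j))"
proof
  assume "\<exists>m\<ge>n + i. P m"
  then obtain m where "m \<ge> n + i" "P m" by blast
  then show "\<exists>j\<ge>i. P (n + j)" by (intro exI[of _ "m - n"]) auto
qed (use add_left_mono in blast)

lemma all_add_interval_iff:
  "(\<forall>m. (n::nat) + i \<le> m \<and> m < n + j \<longrightarrow> P m) \<longleftrightarrow> (\<forall>k. i \<le> k \<and> k < j \<longrightarrow> P (n + k))"
proof
  assume *: "\<forall>k. i \<le> k \<and> k < j \<longrightarrow> P (n + k)"
  show "\<forall>m. n + i \<le> m \<and> m < n + j \<longrightarrow> P m"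
  proof (intro allI impI)
    fix m assume "n + i \<le> m \<and> m < n + j"
    then have "i \<le> m - n \<and> m - n < j" "n + (m - n) = m" by auto
    then show "P m" using * by metis
  qed
qed auto

lemma psat_ptop [simp]: "psat W R L n w ptop"
  by (simp add: ptop_def)

lemma psat_por [simp]: "psat W R L n w (por a b) \<longleftrightarrow> psat W R L n w a \<or> psat W R L n w b"
  by (simp add: por_def)

lemma psat_pimp [simp]: "psat W R L n w (pimp a b) \<longleftrightarrow> (psat W R L n w a \<longrightarrow> psat W R L n w b)"
  by (simp add: pimp_def)

lemma psat_PG [simp]: "psat W R L n w (PG a) \<longleftrightarrow> (\<forall>n'\<ge>n. psat W R L n' w a)"
  by (auto simp: PG_def)

lemma psat_pconj [simp]: "psat W R L n w (pconj as) \<longleftrightarrow> (\<forall>a\<in>set as. psat W R L n w a)"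
  by (induction as) auto

lemma psat_t2_SDia:
  "psat W R L n w (t2 (SDia s \<psi>)) \<longleftrightarrow>
     (\<exists>w'. (w, w') \<in> R \<and> psat W R L n w' (sp_to_ptl s) \<and> psat W R L n w' (t2 \<psi>))"
  by (cases s) simp_all

lemma psat_t2_SBox:
  "psat W R L n w (t2 (SBox s \<psi>)) \<longleftrightarrow>
     (\<forall>w'. (w, w') \<in> R \<longrightarrow> psat W R L n w' (sp_to_ptl s) \<longrightarrow> psat W R L n w' (t2 \<psi>))"
  by (cases s) simp_all

lemma psat_chi:
  "psat W R L n w (chi \<phi>) \<longleftrightarrow>
    (\<forall>k\<in>stps \<phi>. \<exists>w'. (w, w') \<in> R \<and> Inr k \<in> L (n, w')) \<and>
    (\<forall>w'. (w, w') \<in> R \<longrightarrow> (\<forall>k\<in>stps \<phi>.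
       (\<forall>n'\<ge>n. Inr k \<in> L (n', w')) \<or> (\<forall>n'\<ge>n. Inr k \<notin> L (n', w'))))"
  using finite_stps[of \<phi>] by (auto simp: chi_def Let_def)

lemma psat_shift:
  "psat W R L (n + i) w \<phi> \<longleftrightarrow> psat W R (\<lambda>(j, v). L (n + j, v)) i w \<phi>"
  by (induction \<phi> arbitrary: i w)
    (simp_all add: ex_ge_add_iff all_add_interval_iff flip: add_Suc_right)

lemma ptl_satisfiable_at_zero:
  "ptl_satisfiable TYPE('w) \<phi> \<longleftrightarrow>
     (\<exists>(W :: 'w set) R L w. ptl_model W R \<and> w \<in> W \<and> psat W R L 0 w \<phi>)"
  unfolding ptl_satisfiable_def using psat_shift[where i = 0] by fastforce

(* P is arbitrary: ssat never inspects its first argument. *)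
lemma ssat_iff_psat_t2:
  assumes cluster: "\<And>v v'. v \<in> C \<Longrightarrow> (v, v') \<in> R \<longleftrightarrow> v' \<in> C"
    and lam_sub: "\<And>s. lam s \<subseteq> \<tau> ` C"
    and vars: "\<And>v i p. v \<in> C \<Longrightarrow> p \<in> V \<Longrightarrow> p \<in> \<tau> v i \<longleftrightarrow> Inl p \<in> L (i, v)"
    and standpoints: "\<And>v i s. v \<in> C \<Longrightarrow> sp_syms s \<subseteq> S \<Longrightarrow>
                        \<tau> v \<in> lam s \<longleftrightarrow> psat W R L i v (sp_to_ptl s)"
    and "svars \<psi> \<subseteq> V" "stps \<psi> \<subseteq> S" "w \<in> C"
  shows "ssat P lam (\<tau> w) i \<psi> \<longleftrightarrow> psat W R L i w (t2 \<psi>)"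
  using assms(5-)
proof (induction \<psi> arbitrary: w i)
  case (SVar p)
  then show ?case by (simp add: vars)
next
  case (SSharp s s')
  have "lam s \<subseteq> lam s' \<longleftrightarrow> (\<forall>v\<in>C. \<tau> v \<in> lam s \<longrightarrow> \<tau> v \<in> lam s')"
    using lam_sub by blast
  also have "\<dots> \<longleftrightarrow> (\<forall>v\<in>C. psat W R L i v (sp_to_ptl s) \<longrightarrow> psat W R L i v (sp_to_ptl s'))"
    using SSharp.prems standpoints[of _ s i] standpoints[of _ s' i] by simp
  finally show ?case
    using cluster SSharp.prems(3) by auto
next
  case (SDia s \<psi>)
  have "(\<exists>\<sigma>\<in>lam s. ssat P lam \<sigma> i \<psi>) \<longleftrightarrow> (\<exists>v\<in>C. \<tau> v \<in> lam s \<and> ssat P lam (\<tau> v) i \<psi>)"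
    using lam_sub by blast
  also have "\<dots> \<longleftrightarrow> (\<exists>v\<in>C. psat W R L i v (sp_to_ptl s) \<and> psat W R L i v (t2 \<psi>))"
    using SDia standpoints[of _ s i] by simp
  finally show ?case
    using cluster SDia.prems(3) by (auto simp: psat_t2_SDia)
next
  case (SBox s \<psi>)
  have "(\<forall>\<sigma>\<in>lam s. ssat P lam \<sigma> i \<psi>) \<longleftrightarrow> (\<forall>v\<in>C. \<tau> v \<in> lam s \<longrightarrow> ssat P lam (\<tau> v) i \<psi>)"
    using lam_sub by blast
  also have "\<dots> \<longleftrightarrow> (\<forall>v\<in>C. psat W R L i v (sp_to_ptl s) \<longrightarrow> psat W R L i v (t2 \<psi>))"
    using SBox standpoints[of _ s i] by simp
  finally show ?case
    using cluster SBox.prems(3) by (auto simp: psat_t2_SBox)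
qed simp_all

lemma ptl_satisfiable_t2_if_sltl_satisfiable:
  assumes "sltl_satisfiable \<phi>"
  shows "ptl_satisfiable TYPE(trace) (PAnd (chi \<phi>) (t2 \<phi>))"
proof -
  obtain P lam \<sigma> where model: "sltl_model P lam" and "\<sigma> \<in> P" and sat: "ssat P lam \<sigma> 0 \<phi>"
    using assms unfolding sltl_satisfiable_def by blast
  have lam_sub: "\<And>s. lam s \<subseteq> P" and lam_nonempty: "\<And>s. lam s \<noteq> {}" and "lam Star = P"
    using model by (auto simp: sltl_model_def)
  define L where "L = (\<lambda>(i, \<sigma>'). Inl ` \<sigma>' i \<union> Inr ` {k. \<sigma>' \<in> lam (Sp k)})"
  have t2: "ssat P lam \<sigma> 0 \<phi> \<longleftrightarrow> psat P (P \<times> P) L 0 \<sigma> (t2 \<phi>)"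
  proof (rule ssat_iff_psat_t2[where \<tau> = "\<lambda>\<sigma>. \<sigma>" and C = P and V = UNIV and S = UNIV])
    fix v i s
    assume "v \<in> P"
    then show "v \<in> lam s \<longleftrightarrow> psat P (P \<times> P) L i v (sp_to_ptl s)"
      using \<open>lam Star = P\<close> by (cases s) (auto simp: L_def)
  qed (use lam_sub \<open>\<sigma> \<in> P\<close> in \<open>auto simp: L_def\<close>)
  have chi: "psat P (P \<times> P) L 0 \<sigma> (chi \<phi>)"
    unfolding psat_chi using lam_sub lam_nonempty \<open>\<sigma> \<in> P\<close> by (fastforce simp: L_def)
  have "ptl_model P (P \<times> P)"
    using \<open>\<sigma> \<in> P\<close> by (auto simp: ptl_model_def equiv_def refl_on_def sym_def trans_def)
  from chi t2 sat have "psat P (P \<times> P) L 0 \<sigma> (PAnd (chi \<phi>) (t2 \<phi>))"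
    by simp
  then show ?thesis
    using \<open>ptl_model P (P \<times> P)\<close> \<open>\<sigma> \<in> P\<close> unfolding ptl_satisfiable_def by blast
qed

lemma sltl_satisfiable_if_psat_t2:
  assumes equiv: "equiv W R" and "w \<in> W"
    and chi: "psat W R L 0 w (chi \<phi>)" and t2: "psat W R L 0 w (t2 \<phi>)"
  shows "sltl_satisfiable \<phi>"
proof -
  define C where "C = R `` {w}"
  have cluster: "\<And>v v'. v \<in> C \<Longrightarrow> (v, v') \<in> R \<longleftrightarrow> v' \<in> C"
    using equiv unfolding C_def equiv_def sym_def trans_def by blast
  have "w \<in> C"
    using equiv \<open>w \<in> W\<close> unfolding C_def equiv_def refl_on_def by blast
  have inhabited: "\<And>k. k \<in> stps \<phi> \<Longrightarrow> \<exists>v\<in>C. Inr k \<in> L (0, v)"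
    and rigid: "\<And>v k i. v \<in> C \<Longrightarrow> k \<in> stps \<phi> \<Longrightarrow> Inr k \<in> L (i, v) \<longleftrightarrow> Inr k \<in> L (0, v)"
    using chi unfolding psat_chi C_def by blast+
  obtain m where m: "svars \<phi> \<subseteq> {..<m}"
    using finite_svars finite_nat_set_iff_bounded by (metis lessThan_iff subsetI)
  (* The variables m + k of the trace of v record whether s_k holds at v, so that membership
     in lam (Sp k) is a property of the trace and not only of the world; otherwise two worlds
     with the same trace could break s \<preceq> s'. *)
  define \<tau> where "\<tau> v i = {p. p < m \<and> Inl p \<in> L (i, v)} \<union> (+) m ` {k. Inr k \<in> L (0, v)}" for v i
  define lam where "lam s = {\<sigma> \<in> \<tau> ` C. \<forall>k \<in> sp_syms s \<inter> stps \<phi>. m + k \<in> \<sigma> 0}" for s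
  have standpoint_tag: "m + k \<in> \<tau> v 0 \<longleftrightarrow> Inr k \<in> L (0, v)" for v k
    by (auto simp: \<tau>_def)
  have "sltl_model (\<tau> ` C) lam"
    unfolding sltl_model_def
  proof (intro conjI allI)
    fix s
    show "lam s \<noteq> {}"
    proof (cases "sp_syms s \<inter> stps \<phi> = {}")
      case True
      then show ?thesis using \<open>w \<in> C\<close> by (auto simp: lam_def)
    next
      case False
      then obtain k where "s = Sp k" "k \<in> stps \<phi>" by (cases s) auto
      then show ?thesis using inhabited by (fastforce simp: lam_def standpoint_tag)
    qed
  qed (use \<open>w \<in> C\<close> in \<open>auto simp: lam_def\<close>)
  moreover have "ssat (\<tau> ` C) lam (\<tau> w) 0 \<phi> \<longleftrightarrow> psat W R L 0 w (t2 \<phi>)"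
  proof (rule ssat_iff_psat_t2[where V = "{..<m}" and S = "stps \<phi>"])
    fix v i s
    assume "v \<in> C" "sp_syms s \<subseteq> stps \<phi>"
    then show "\<tau> v \<in> lam s \<longleftrightarrow> psat W R L i v (sp_to_ptl s)"
      using rigid[of v _ i] by (cases s) (auto simp: lam_def standpoint_tag)
  next
    show "\<And>v i p. p \<in> {..<m} \<Longrightarrow> p \<in> \<tau> v i \<longleftrightarrow> Inl p \<in> L (i, v)"
      by (auto simp: \<tau>_def)
  qed (use cluster m \<open>w \<in> C\<close> in \<open>auto simp: lam_def\<close>)
  ultimately show ?thesis
    using t2 \<open>w \<in> C\<close> unfolding sltl_satisfiable_def by blast
qed

theorem lemma2:
  fixes \<phi> :: sltl
  shows "(sltl_satisfiable \<phi> \<longrightarrow> ptl_satisfiable TYPE(trace) (PAnd (chi \<phi>) (t2 \<phi>)))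
       \<and> (ptl_satisfiable TYPE('w) (PAnd (chi \<phi>) (t2 \<phi>)) \<longrightarrow> sltl_satisfiable \<phi>)"
proof (intro conjI impI)
  assume "sltl_satisfiable \<phi>"
  then show "ptl_satisfiable TYPE(trace) (PAnd (chi \<phi>) (t2 \<phi>))"
    by (rule ptl_satisfiable_t2_if_sltl_satisfiable)
next
  assume "ptl_satisfiable TYPE('w) (PAnd (chi \<phi>) (t2 \<phi>))"
  then obtain W :: "'w set" and R L w
    where "ptl_model W R" "w \<in> W" "psat W R L 0 w (PAnd (chi \<phi>) (t2 \<phi>))"
    unfolding ptl_satisfiable_at_zero by blast
  then show "sltl_satisfiable \<phi>"
    by (auto simp: ptl_model_def intro: sltl_satisfiable_if_psat_t2)
qed

end
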